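(* Let $m,n$ be positive integers. Then $$\binom{3m}{3n}\equiv\binom{m}{n}(1+9mn^2-9m^2n)\pmod{27}.$$ *)

theory Defs
  imports "HOL-Number_Theory.Number_Theory"
begin

end

theory Submission
  imports Defs "HOL-Computational_Algebra.Polynomial"
begin

text \<open>
  Since (1 + X)^3 = (1 + X^3) + 3 (X + X^2), the binomial theorem gives
  (1 + X)^(3m) = \<Sum>k C(m,k) 3^k (X + X^2)^k (1 + X^3)^(m-k). Modulo 27 only k \<le> 2 contributes to
  the coefficient of X^(3n): k = 0 gives C(m,n), k = 1 gives nothing because no exponent of
  (X + X^2) (1 + X^3)^(m-1) is divisible by 3, and k = 2 gives 18 C(m,2) C(m-2,n-1) = 9 n (m-n) C(m,n).
  This differs from the claimed right-hand side by 9 n (m-n) (m+1) C(m,n), and a case analysis on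
  m mod 3 shows that 3 divides n (m-n) (m+1) C(m,n).
\<close>

lemma coeff_one_plus_X_power: "coeff ([:1, 1:] ^ n) i = (of_nat (n choose i) :: 'a :: comm_semiring_1)"
proof (cases "i \<le> n")
  case True
  then show ?thesis by (simp add: coeff_linear_poly_power)
next
  case False
  then have "degree ([:1, 1:] ^ n :: 'a poly) < i"
    using degree_power_le[of "[:1, 1:] :: 'a poly" n] by simp
  then show ?thesis using False by (simp add: coeff_eq_0 binomial_eq_0)
qed

lemma prime_dvd_choose:
  fixes p a k :: nat
  assumes "prime p" "p dvd a" "\<not> p dvd k"
  shows "p dvd a choose k"
proof -
  have "k > 0" using assms(3) by (cases k) auto
  then have "k * (a choose k) = a * ((a - 1) choose (k - 1))"
    using binomial_absorption[of "k - 1" a] by simp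
  then have "p dvd k * (a choose k)" using assms(2) by simp
  moreover have "coprime p k" using assms(1,3) by (simp add: prime_imp_coprime)
  ultimately show ?thesis using coprime_dvd_mult_right_iff by blast
qed

lemma choose_two_mult_choose_diff:
  fixes m n :: nat
  assumes "n \<ge> 1"
  shows "2 * (m choose 2) * ((m - 2) choose (n - 1)) = n * (m - n) * (m choose n)"
proof -
  have "2 * (m choose 2) * ((m - 2) choose (n - 1)) = m * ((m - 1) * ((m - 2) choose (n - 1)))"
    using binomial_absorption[of 1 m] by (simp add: numeral_2_eq_2)
  also have "(m - 1) * ((m - 2) choose (n - 1)) = (m - n) * ((m - 1) choose (n - 1))"
    using binomial_absorb_comp[of "m - 1" "n - 1"] assms by (simp add: numeral_2_eq_2)
  also have "m * ((m - n) * ((m - 1) choose (n - 1))) = (m - n) * (n * (m choose n))"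
    using binomial_absorption[of "n - 1" m] assms by simp
  finally show ?thesis by (simp add: mult_ac)
qed

lemma three_dvd_mult_diff_choose_Suc:
  fixes m n :: nat
  shows "3 dvd n * (m - n) * (m choose n) * (m + 1)"
proof (cases "n = 0")
  case True then show ?thesis by simp
next
  case n_pos: False
  consider "m mod 3 = 0" | "m mod 3 = 2" | "m mod 3 = 1" by linarith
  then show ?thesis
  proof cases
    case 1
    have "n * (m choose n) = m * ((m - 1) choose (n - 1))"
      using binomial_absorption[of "n - 1" m] n_pos by simp
    then have "3 dvd (n * (m choose n)) * ((m - n) * (m + 1))" using 1 by (simp add: mod_0_imp_dvd)
    then show ?thesis by (simp only: mult_ac)
  next
    case 2
    then have "3 dvd m + 1" by presburger
    then show ?thesis by (intro dvd_mult2 dvd_mult)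
  next
    case 3
    consider "n mod 3 = 1" | "3 dvd n" | "\<not> 3 dvd n" by blast
    then show ?thesis
    proof cases
      case 1
      then have "3 dvd m - n" using 3 by presburger
      then show ?thesis by (intro dvd_mult2 dvd_mult)
    next
      case 2 then show ?thesis by (intro dvd_mult2)
    next
      case 3
      have "3 dvd m - 1" using \<open>m mod 3 = 1\<close> by presburger
      then have "3 dvd (m - 1) choose n"
        using prime_dvd_choose[of 3 "m - 1" n] 3 by simp
      moreover have "(m - n) * (m choose n) = m * ((m - 1) choose n)"
        by (rule binomial_absorb_comp)
      ultimately have "3 dvd (m - n) * (m choose n)" by simp
      then have "3 dvd ((m - n) * (m choose n)) * (n * (m + 1))" by (rule dvd_mult2)
      then show ?thesis by (simp only: mult_ac)
    qed
  qed
qed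

definition one_plus_X3 :: "int poly" where
  "one_plus_X3 = [:1, 0, 0, 1:]"

definition X_plus_X2 :: "int poly" where
  "X_plus_X2 = [:0, 1, 1:]"

lemma one_plus_X_cube: "[:1, 1:] ^ 3 = one_plus_X3 + smult 3 X_plus_X2"
  by (simp add: one_plus_X3_def X_plus_X2_def power3_eq_cube)

lemma coeff_one_plus_X3_power:
  "coeff (one_plus_X3 ^ k) i = (if 3 dvd i then int (k choose (i div 3)) else 0)"
proof -
  have X3: "one_plus_X3 = monom 1 3 + 1"
    by (simp add: one_plus_X3_def monom_altdef power3_eq_cube one_pCons)
  have "one_plus_X3 ^ k = (\<Sum>j\<le>k. of_nat (k choose j) * monom 1 3 ^ j * 1 ^ (k - j))"
    unfolding X3 by (rule binomial_ring)
  then have "coeff (one_plus_X3 ^ k) i = (\<Sum>j\<le>k. if i = 3 * j then int (k choose j) else 0)"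
    by (simp add: coeff_sum of_nat_poly coeff_monom monom_power) (auto intro!: sum.cong)
  also have "\<dots> = (if 3 dvd i then int (k choose (i div 3)) else 0)"
  proof (cases "3 dvd i")
    case True
    then have "(\<Sum>j\<le>k. if i = 3 * j then int (k choose j) else 0)
             = (\<Sum>j\<le>k. if j = i div 3 then int (k choose j) else 0)"
      by (intro sum.cong) auto
    with True show ?thesis by (simp add: sum.delta)
  qed (auto intro!: sum.neutral)
  finally show ?thesis .
qed

lemma coeff_X_plus_X2_times_one_plus_X3_power:
  "coeff (X_plus_X2 * one_plus_X3 ^ k) (3 * n) = 0"
proof (cases n)
  case (Suc n')
  then have "3 * n = Suc (Suc (Suc (3 * n')))" by simp
  then have "coeff (X_plus_X2 * one_plus_X3 ^ k) (3 * n)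
           = coeff (one_plus_X3 ^ k) (Suc (Suc (3 * n'))) + coeff (one_plus_X3 ^ k) (Suc (3 * n'))"
    by (simp add: X_plus_X2_def)
  then show ?thesis by (simp add: coeff_one_plus_X3_power) presburger
qed (simp add: X_plus_X2_def)

lemma coeff_X_plus_X2_sq_times_one_plus_X3_power:
  assumes "n > 0"
  shows "coeff (X_plus_X2 ^ 2 * one_plus_X3 ^ k) (3 * n) = 2 * int (k choose (n - 1))"
proof -
  obtain n' where n: "n = Suc n'" using assms by (cases n) auto
  then have "3 * n = Suc (Suc (Suc (3 * n')))" by simp
  moreover have "X_plus_X2 ^ 2 = [:0, 0, 1, 2, 1:]"
    by (simp add: X_plus_X2_def power2_eq_square)
  ultimately have "coeff (X_plus_X2 ^ 2 * one_plus_X3 ^ k) (3 * n)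
           = coeff (one_plus_X3 ^ k) (Suc (3 * n')) + 2 * coeff (one_plus_X3 ^ k) (3 * n')
             + (if n' = 0 then 0 else coeff (one_plus_X3 ^ k) (3 * n' - 1))"
    by (cases n') (auto simp: coeff_pCons)
  also have "\<dots> = 2 * int (k choose n')"
    by (simp add: coeff_one_plus_X3_power) presburger
  finally show ?thesis using n by simp
qed

lemma int_choose_three_mult_eq_sum:
  "int ((3 * m) choose j)
     = (\<Sum>k\<le>m. int (m choose k) * 3 ^ k * coeff (X_plus_X2 ^ k * one_plus_X3 ^ (m - k)) j)"
proof -
  have "int ((3 * m) choose j) = coeff ([:1, 1:] ^ (3 * m)) j"
    by (simp add: coeff_one_plus_X_power)
  also have "[:1, 1:] ^ (3 * m) = (smult 3 X_plus_X2 + one_plus_X3) ^ m"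
    by (simp add: power_mult one_plus_X_cube add.commute)
  also have "\<dots> = (\<Sum>k\<le>m. of_nat (m choose k) * smult 3 X_plus_X2 ^ k * one_plus_X3 ^ (m - k))"
    by (rule binomial_ring)
  finally show ?thesis
    by (simp add: coeff_sum of_nat_poly smult_power mult.assoc mult.left_commute)
qed

lemma choose_three_mult_cong_mod_27:
  fixes m n :: nat
  assumes "n > 0"
  shows "[int ((3 * m) choose (3 * n))
            = int (m choose n) + 18 * int (m choose 2) * int ((m - 2) choose (n - 1))] (mod 27)"
proof -
  define g where
    "g k = int (m choose k) * 3 ^ k * coeff (X_plus_X2 ^ k * one_plus_X3 ^ (m - k)) (3 * n)" for k
  have g_beyond: "g k = 0" if "k > m" for k
    using that by (simp add: g_def)
  have g_high: "27 dvd g k" if "k \<ge> 3" for k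
  proof -
    have "(3::int) ^ 3 dvd 3 ^ k" using that by (rule le_imp_power_dvd)
    then show ?thesis unfolding g_def by (intro dvd_mult dvd_mult2) simp
  qed
  have "int ((3 * m) choose (3 * n)) = (\<Sum>k\<le>m. g k)"
    unfolding g_def by (rule int_choose_three_mult_eq_sum)
  also have "\<dots> = (\<Sum>k<m + 3. g k)"
    by (rule sum.mono_neutral_left) (auto intro: g_beyond)
  also have "\<dots> = (\<Sum>k<3. g k) + (\<Sum>k\<in>{3..<m + 3}. g k)"
  proof -
    have "{..<m + 3} = {..<3} \<union> {3..<m + 3}" by auto
    moreover have "{..<3} \<inter> {3..<m + 3} = {}" by auto
    ultimately show ?thesis by (simp add: sum.union_disjoint)
  qed
  also have "[\<dots> = (\<Sum>k<3. g k) + 0] (mod 27)"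
    by (intro cong_add cong_refl) (auto simp: cong_0_iff intro!: dvd_sum g_high)
  also have "(\<Sum>k<3. g k) + 0 = g 0 + g 1 + g 2"
    by (simp add: numeral_3_eq_3 numeral_2_eq_2)
  also have "g 0 = int (m choose n)"
    by (simp add: g_def coeff_one_plus_X3_power)
  also have "g 1 = 0"
    by (simp add: g_def coeff_X_plus_X2_times_one_plus_X3_power)
  also have "g 2 = 18 * int (m choose 2) * int ((m - 2) choose (n - 1))"
    using assms by (simp add: g_def coeff_X_plus_X2_sq_times_one_plus_X3_power)
  finally show ?thesis by simp
qed

theorem lemma2p9:
  fixes m n :: nat
  assumes "m > 0" and "n > 0"
  shows "[int ((3*m) choose (3*n)) = int (m choose n) * (1 + 9 * int m * (int n)^2 - 9 * (int m)^2 * int n)] (mod 27)"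
proof -
  define c where "c = int n * (int m - int n) * int (m choose n)"
  \<comment> \<open>also for \<open>n > m\<close>, where the truncated \<open>m - n\<close> is harmless because \<open>m choose n = 0\<close>\<close>
  have c_nat: "c = int (n * (m - n) * (m choose n))"
    unfolding c_def by (cases "n \<le> m") (simp_all add: of_nat_diff binomial_eq_0)
  have "[int ((3*m) choose (3*n))
          = int (m choose n) + 18 * int (m choose 2) * int ((m - 2) choose (n - 1))] (mod 27)"
    using assms(2) by (rule choose_three_mult_cong_mod_27)
  also have "18 * int (m choose 2) * int ((m - 2) choose (n - 1)) = 9 * c"
  proof -
    have "int (2 * (m choose 2) * ((m - 2) choose (n - 1))) = c"
      using choose_two_mult_choose_diff[of n m] assms(2) by (simp only: c_nat)
    then show ?thesis by simp
  qed
  also have "[int (m choose n) + 9 * c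
          = int (m choose n) + 9 * c - 9 * (c * (int m + 1))] (mod 27)"
  proof -
    have "c * (int m + 1) = int (n * (m - n) * (m choose n) * (m + 1))"
      unfolding c_nat by (simp only: of_nat_mult of_nat_add of_nat_1)
    then have "3 dvd c * (int m + 1)"
      using three_dvd_mult_diff_choose_Suc[of n m] by (simp only: int_dvd_int_iff[symmetric] of_nat_numeral)
    then have "9 * 3 dvd 9 * (c * (int m + 1))" by (rule mult_dvd_mono[OF dvd_refl])
    then show ?thesis by (simp add: cong_iff_dvd_diff)
  qed
  also have "int (m choose n) + 9 * c - 9 * (c * (int m + 1))
          = int (m choose n) * (1 + 9 * int m * (int n)^2 - 9 * (int m)^2 * int n)"
    by (simp add: c_def algebra_simps power2_eq_square)
  finally show ?thesis .
qed

end
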